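(* Let $\mathcal{T}$ be a decision tree of depth $T$ whose edges are colored red and black such that every node has at most one outgoing black edge (edge to a child), and let $G$ be the maximum number of red edges on a root-to-leaf path. Then $\mathsf{WDT}(\mathcal{T})\le 3\sqrt{GT}$.
   Context: A decision tree is a finite rooted tree whose internal nodes each query a coordinate of the input (over a finite alphabet) and whose children correspond to distinct query outcomes; leaves carry outputs; its depth is the maximum number of edges on a root-to-leaf path. A weighting scheme for $\mathcal{T}$ is $w:V\to\mathbb{R}_{\ge0}$ such that $w_v=0$ for all leaves and, for every internal node $v$ with children $C_v$, there exist positive semidefinite $X,Y\in\mathbb{C}^{C_v\times C_v}$ with $X[c_1,c_2]-Y[c_1,c_2]=1$ for all distinct $c_1,c_2\in C_v$ and $w_v-w_c\ge X[c,c]+Y[c,c]$ for all $c\in C_v$. $\mathsf{WDT}(\mathcal{T})$ is the minimum of $w_{\mathrm{root}}$ over all weighting schemes. *)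

theory Defs
  imports "HOL-Analysis.Analysis"
begin

text \<open>An internal node queries input coordinate
  (a nat) and has a list of children, each labelled by the query outcome
  (of the alphabet type 'a) and by the colour of the edge to that child
  (True = black, False = red).\<close>

datatype ('a, 'o) dtree =
    Leaf 'o
  | Query nat "('a \<times> bool \<times> ('a, 'o) dtree) list"

fun children :: "('a, 'o) dtree \<Rightarrow> ('a \<times> bool \<times> ('a, 'o) dtree) list" where
  "children (Leaf _) = []"
| "children (Query _ cs) = cs"

fun is_leaf :: "('a, 'o) dtree \<Rightarrow> bool" where
  "is_leaf (Leaf _) = True"
| "is_leaf (Query _ _) = False"

fun wf_dtree :: "('a, 'o) dtree \<Rightarrow> bool" where
  "wf_dtree (Leaf _) = True"
| "wf_dtree (Query _ cs) =
     (cs \<noteq> [] \<and> distinct (map fst cs) \<and> (\<forall>c \<in> set cs. wf_dtree (snd (snd c))))"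

fun at_most_one_black :: "('a, 'o) dtree \<Rightarrow> bool" where
  "at_most_one_black (Leaf _) = True"
| "at_most_one_black (Query _ cs) =
     (length (filter (\<lambda>c. fst (snd c)) cs) \<le> 1 \<and> (\<forall>c \<in> set cs. at_most_one_black (snd (snd c))))"

fun depth :: "('a, 'o) dtree \<Rightarrow> nat" where
  "depth (Leaf _) = 0"
| "depth (Query _ cs) = Max (insert 0 ((\<lambda>c. Suc (depth (snd (snd c)))) ` set cs))"

fun red_depth :: "('a, 'o) dtree \<Rightarrow> nat" where
  "red_depth (Leaf _) = 0"
| "red_depth (Query _ cs) =
     Max (insert 0 ((\<lambda>c. (if fst (snd c) then 0 else 1) + red_depth (snd (snd c))) ` set cs))"

fun node_at :: "('a, 'o) dtree \<Rightarrow> nat list \<Rightarrow> ('a, 'o) dtree option" where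
  "node_at t [] = Some t"
| "node_at t (i # p) =
     (if i < length (children t) then node_at (snd (snd (children t ! i))) p else None)"

definition positions :: "('a, 'o) dtree \<Rightarrow> nat list set" where
  "positions t = {p. node_at t p \<noteq> None}"

definition psd :: "nat \<Rightarrow> (nat \<Rightarrow> nat \<Rightarrow> complex) \<Rightarrow> bool" where
  "psd k X \<longleftrightarrow>
     (\<forall>i<k. \<forall>j<k. X i j = cnj (X j i)) \<and>
     (\<forall>v :: nat \<Rightarrow> complex. 0 \<le> Re (\<Sum>i<k. \<Sum>j<k. cnj (v i) * X i j * v j))"

definition weighting_scheme :: "('a, 'o) dtree \<Rightarrow> (nat list \<Rightarrow> real) \<Rightarrow> bool" where
  "weighting_scheme t w \<longleftrightarrow>
     (\<forall>p \<in> positions t. 0 \<le> w p) \<and>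
     (\<forall>p \<in> positions t. is_leaf (the (node_at t p)) \<longrightarrow> w p = 0) \<and>
     (\<forall>p \<in> positions t. \<not> is_leaf (the (node_at t p)) \<longrightarrow>
        (let k = length (children (the (node_at t p))) in
         \<exists>X Y. psd k X \<and> psd k Y \<and>
           (\<forall>c1<k. \<forall>c2<k. c1 \<noteq> c2 \<longrightarrow> X c1 c2 - Y c1 c2 = 1) \<and>
           (\<forall>c<k. w p - w (p @ [c]) \<ge> Re (X c c + Y c c))))"

definition WDT :: "('a, 'o) dtree \<Rightarrow> real" where
  "WDT t = Inf {w [] | w. weighting_scheme t w}"

end

theory Submission
  imports Defs
begin

(* For a parameter 0 < s <= 1 charge s for a black edge and 2/s - 1 for a red edge, and
   weight every node by the largest total charge on a path from it down to a leaf.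
   At a node with at most one black outgoing edge the rank-one matrices X = f f* and
   Y = g g*, where f = sqrt s, g = 0 on the black child and f = 1/sqrt s,
   g = sqrt (1/s - 1) on the red children, satisfy X - Y = 1 off the diagonal and
   X + Y = charge on the diagonal; so these weights form a weighting scheme.
   Its root weight is at most s T + (2/s - 1 - s) G, and the choice s = sqrt (2G/T)
   (s = 1 if 2G > T, s -> 0 if G = 0) makes this at most 3 sqrt (GT). *)

definition edge_cost :: "real \<Rightarrow> bool \<Rightarrow> real" where
  "edge_cost s black = (if black then s else 2 / s - 1)"

fun max_path_cost :: "real \<Rightarrow> ('a, 'o) dtree \<Rightarrow> real" where
  "max_path_cost s (Leaf _) = 0"
| "max_path_cost s (Query _ cs) =
     Max (insert 0 ((\<lambda>c. edge_cost s (fst (snd c)) + max_path_cost s (snd (snd c))) ` set cs))"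

lemma max_path_cost_nonneg: "0 \<le> max_path_cost s t"
  by (cases t) auto

lemma max_path_cost_Query_ge:
  "c \<in> set cs \<Longrightarrow>
     edge_cost s (fst (snd c)) + max_path_cost s (snd (snd c)) \<le> max_path_cost s (Query q cs)"
  by (auto intro: Max_ge)

lemma depth_Query_ge: "c \<in> set cs \<Longrightarrow> Suc (depth (snd (snd c))) \<le> depth (Query q cs)"
  by (auto intro: Max_ge)

lemma red_depth_Query_ge:
  "c \<in> set cs \<Longrightarrow>
     (if fst (snd c) then 0 else 1) + red_depth (snd (snd c)) \<le> red_depth (Query q cs)"
  by (auto intro: Max_ge)

lemma edge_cost_eq:
  "edge_cost s black = s + (2 / s - 1 - s) * (if black then 0 else 1)"
  by (simp add: edge_cost_def)

lemma red_surcharge_nonneg: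
  fixes s :: real
  assumes "0 < s" "s \<le> 1"
  shows "0 \<le> 2 / s - 1 - s"
proof -
  have "s * s \<le> 2 - s" using assms mult_left_le[of s s] by linarith
  then show ?thesis using assms by (simp add: field_simps)
qed

lemma max_path_cost_le:
  fixes s :: real
  assumes "0 < s" "s \<le> 1"
  shows "max_path_cost s t \<le> s * depth t + (2 / s - 1 - s) * red_depth t"
proof (induction t)
  case (Leaf x)
  then show ?case by simp
next
  case (Query q cs)
  define a where "a = 2 / s - 1 - s"
  have a: "0 \<le> a" unfolding a_def using red_surcharge_nonneg[OF assms] .
  have "edge_cost s (fst (snd c)) + max_path_cost s (snd (snd c))
          \<le> s * depth (Query q cs) + a * red_depth (Query q cs)"
    if c: "c \<in> set cs" for c
  proof -
    let ?r = "if fst (snd c) then 0 else 1 :: nat"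
    have "max_path_cost s (snd (snd c)) \<le> s * depth (snd (snd c)) + a * red_depth (snd (snd c))"
      using Query.IH[OF c] unfolding a_def by (metis snds.intros prod.collapse)
    then have "edge_cost s (fst (snd c)) + max_path_cost s (snd (snd c))
                 \<le> s * Suc (depth (snd (snd c))) + a * (?r + red_depth (snd (snd c)))"
      unfolding edge_cost_eq a_def[symmetric] by (simp add: algebra_simps)
    also have "\<dots> \<le> s * depth (Query q cs) + a * red_depth (Query q cs)"
      using depth_Query_ge[OF c, of q] red_depth_Query_ge[OF c, of q] a assms
      by (intro add_mono mult_left_mono) auto
    finally show ?thesis .
  qed
  moreover have "0 \<le> s * depth (Query q cs) + a * red_depth (Query q cs)"
    using a assms by simp
  ultimately show ?case
    unfolding max_path_cost.simps a_def[symmetric] by (subst Max_le_iff) auto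
qed

lemma psd_outer_product: "psd k (\<lambda>i j. f i * cnj (f j))"
  unfolding psd_def
proof (intro conjI allI impI)
  fix v :: "nat \<Rightarrow> complex"
  let ?z = "\<Sum>i<k. cnj (v i) * f i"
  have "(\<Sum>i<k. \<Sum>j<k. cnj (v i) * (f i * cnj (f j)) * v j) = ?z * cnj ?z"
    by (simp add: sum_product mult_ac)
  then show "0 \<le> Re (\<Sum>i<k. \<Sum>j<k. cnj (v i) * (f i * cnj (f j)) * v j)"
    by (simp only: complex_mult_cnj) simp
qed simp

lemma nth_eq_if_length_filter_le_1:
  assumes "length (filter P xs) \<le> 1" "i < length xs" "j < length xs" "P (xs ! i)" "P (xs ! j)"
  shows "i = j"
proof (rule ccontr)
  assume "i \<noteq> j"
  have "card {i, j} \<le> card {i. i < length xs \<and> P (xs ! i)}"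
    using assms by (intro card_mono) auto
  then show False using assms \<open>i \<noteq> j\<close> by (simp add: length_filter_conv_card)
qed

lemma edge_cost_psd_decomposition:
  fixes s :: real and bs :: "bool list"
  assumes s: "0 < s" "s \<le> 1" and one_black: "length (filter id bs) \<le> 1"
  shows "\<exists>X Y. psd (length bs) X \<and> psd (length bs) Y \<and>
           (\<forall>c1<length bs. \<forall>c2<length bs. c1 \<noteq> c2 \<longrightarrow> X c1 c2 - Y c1 c2 = 1) \<and>
           (\<forall>c<length bs. Re (X c c + Y c c) = edge_cost s (bs ! c))"
proof -
  define f where "f c = (if bs ! c then sqrt s else 1 / sqrt s)" for c
  define g where "g c = (if bs ! c then 0 else sqrt (1 / s - 1))" for c
  have inv_s: "1 \<le> 1 / s" "1 / sqrt s * (1 / sqrt s) = 1 / s"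
    using s by (simp_all add: real_sqrt_mult[symmetric])
  have off_diagonal: "f c1 * f c2 - g c1 * g c2 = 1"
    if "c1 < length bs" "c2 < length bs" "c1 \<noteq> c2" for c1 c2
  proof -
    have "\<not> (bs ! c1 \<and> bs ! c2)"
      using nth_eq_if_length_filter_le_1[OF one_black] that by auto
    then show ?thesis
      using s inv_s unfolding f_def g_def by (auto simp: mult.commute)
  qed
  have diagonal: "f c * f c + g c * g c = edge_cost s (bs ! c)" for c
    using s inv_s unfolding f_def g_def edge_cost_def by auto
  show ?thesis
    by (intro exI[of _ "\<lambda>i j. of_real (f i) * cnj (of_real (f j))"]
        exI[of _ "\<lambda>i j. of_real (g i) * cnj (of_real (g j))"] conjI allI impI psd_outer_product)
      (simp_all add: diagonal off_diagonal flip: of_real_mult of_real_diff)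
qed

lemma node_at_append:
  "node_at t (p @ q) = (case node_at t p of None \<Rightarrow> None | Some n \<Rightarrow> node_at n q)"
  by (induction p arbitrary: t) auto

lemma at_most_one_black_node_at:
  "at_most_one_black t \<Longrightarrow> node_at t p = Some n \<Longrightarrow> at_most_one_black n"
proof (induction p arbitrary: t)
  case (Cons i p)
  then show ?case
    by (cases t) (auto split: if_splits dest: nth_mem)
qed simp

lemma weighting_scheme_max_path_cost:
  fixes s :: real
  assumes s: "0 < s" "s \<le> 1" and "at_most_one_black t"
  shows "weighting_scheme t (\<lambda>p. max_path_cost s (the (node_at t p)))"
  unfolding weighting_scheme_def
proof (intro conjI ballI impI)
  fix p assume "p \<in> positions t" "is_leaf (the (node_at t p))"
  then show "max_path_cost s (the (node_at t p)) = 0"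
    by (cases "the (node_at t p)") auto
next
  fix p assume "p \<in> positions t" "\<not> is_leaf (the (node_at t p))"
  then obtain q cs where node: "node_at t p = Some (Query q cs)"
    unfolding positions_def by (cases "the (node_at t p)") auto
  let ?bs = "map (fst \<circ> snd) cs"
  have "at_most_one_black (Query q cs)"
    using at_most_one_black_node_at[OF \<open>at_most_one_black t\<close> node] .
  then have "length (filter id ?bs) \<le> 1"
    by (simp add: filter_map length_filter_conv_card comp_def)
  then obtain X Y where psd: "psd (length cs) X" "psd (length cs) Y"
    and off_diagonal: "\<forall>c1<length cs. \<forall>c2<length cs. c1 \<noteq> c2 \<longrightarrow> X c1 c2 - Y c1 c2 = 1"
    and diagonal: "\<forall>c<length cs. Re (X c c + Y c c) = edge_cost s (fst (snd (cs ! c)))"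
    using edge_cost_psd_decomposition[OF s, of ?bs] by auto
  have "Re (X c c + Y c c) \<le>
      max_path_cost s (Query q cs) - max_path_cost s (the (node_at t (p @ [c])))"
    if "c < length cs" for c
    using diagonal max_path_cost_Query_ge[OF nth_mem[OF that], of s q] that node
    by (simp add: node_at_append del: max_path_cost.simps)
  with psd off_diagonal show "let k = length (children (the (node_at t p))) in
      \<exists>X Y. psd k X \<and> psd k Y \<and> (\<forall>c1<k. \<forall>c2<k. c1 \<noteq> c2 \<longrightarrow> X c1 c2 - Y c1 c2 = 1) \<and>
        (\<forall>c<k. max_path_cost s (the (node_at t p)) - max_path_cost s (the (node_at t (p @ [c])))
                 \<ge> Re (X c c + Y c c))"
    unfolding node Let_def children.simps option.sel by blast
qed (rule max_path_cost_nonneg)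

lemma WDT_le_weighting_scheme: "weighting_scheme t w \<Longrightarrow> WDT t \<le> w []"
  unfolding WDT_def
proof (rule cInf_lower)
  have "[] \<in> positions t" by (simp add: positions_def)
  then show "bdd_below {w [] | w. weighting_scheme t w}"
    by (auto simp: bdd_below_def weighting_scheme_def)
qed auto

lemma WDT_le_depth_red_depth:
  fixes s :: real
  assumes "0 < s" "s \<le> 1" "at_most_one_black t"
  shows "WDT t \<le> s * depth t + (2 / s - 1 - s) * red_depth t"
  using WDT_le_weighting_scheme[OF weighting_scheme_max_path_cost[OF assms]]
    max_path_cost_le[OF assms(1,2), of t]
  by simp

lemma param_bound_le_3_sqrt:
  fixes G T :: real
  assumes "0 < G" "0 \<le> T"
  shows "\<exists>s. 0 < s \<and> s \<le> 1 \<and> s * T + (2 / s - 1 - s) * G \<le> 3 * sqrt (G * T)"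
proof (cases "2 * G \<le> T")
  case True
  define s where "s = sqrt (2 * G / T)"
  have "0 < T" using True assms by linarith
  then have s: "0 < s" "s \<le> 1" "s * s * T = 2 * G"
    using True assms by (simp_all add: s_def)
  have "s * T + (2 / s - 1 - s) * G \<le> s * T + 2 * G / s"
    using s assms by (simp add: algebra_simps)
  also have "\<dots> = sqrt (8 * (G * T))"
  proof (rule real_sqrt_unique[symmetric])
    show "(s * T + 2 * G / s)\<^sup>2 = 8 * (G * T)"
      using s by (simp add: power2_eq_square field_simps flip: s(3))
  qed (use s \<open>0 < T\<close> assms in simp)
  also have "\<dots> \<le> sqrt (9 * (G * T))"
    using assms by (intro real_sqrt_le_mono) simp
  also have "\<dots> = 3 * sqrt (G * T)"
    by (simp add: real_sqrt_mult)
  finally show ?thesis using s by blast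
next
  case False
  have "T = sqrt (T * T)" using assms by simp
  also have "\<dots> \<le> sqrt (9 * (G * T))"
    using False assms mult_right_mono[of T "2 * G" T] mult_nonneg_nonneg[of G T]
    by (intro real_sqrt_le_mono) linarith
  finally show ?thesis
    by (intro exI[of _ 1]) (simp add: real_sqrt_mult)
qed

lemma le_3_sqrt_if_param_bound:
  fixes x G T :: real
  assumes "0 \<le> G" "0 \<le> T"
    and bound: "\<And>s. 0 < s \<Longrightarrow> s \<le> 1 \<Longrightarrow> x \<le> s * T + (2 / s - 1 - s) * G"
  shows "x \<le> 3 * sqrt (G * T)"
proof (cases "G = 0")
  case True
  have "x \<le> 0 + e" if "0 < e" for e
  proof -
    define s where "s = min 1 (e / (T + 1))"
    have "0 < s" "s \<le> 1" using that assms by (simp_all add: s_def)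
    have "s * T \<le> e / (T + 1) * (T + 1)"
      using assms \<open>0 < s\<close> by (intro mult_mono) (auto simp: s_def)
    then show ?thesis
      using bound[OF \<open>0 < s\<close> \<open>s \<le> 1\<close>] True assms by simp
  qed
  then show ?thesis using True by (simp add: field_le_epsilon)
next
  case False
  then obtain s where "0 < s" "s \<le> 1" "s * T + (2 / s - 1 - s) * G \<le> 3 * sqrt (G * T)"
    using param_bound_le_3_sqrt assms by (metis less_eq_real_def)
  then show ?thesis using bound by fastforce
qed

theorem theorem6p4:
  fixes t :: "('a, 'o) dtree"
  assumes "wf_dtree t"
    and "at_most_one_black t"
  shows "WDT t \<le> 3 * sqrt (real (red_depth t) * real (depth t))"
  using le_3_sqrt_if_param_bound WDT_le_depth_red_depth[OF _ _ assms(2)] by simp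

end
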